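(* Let $K$ be a field, $n,\ell\ge1$, $B=\{u_1,\dots,u_\ell\}\subseteq K^n$ with $u_i\ne u_j$ for $i\ne j$, and $\alpha\in K^\ell$. Regard $K[z]=K[z_1,\dots,z_n]$ as a module over itself. Then \[ \sigma(N_{B,\alpha})=\{f\in K[z]: |S_{\alpha_{f,B}}|\le1\},\qquad \tau(N_{B,\alpha})=\{f\in K[z]: \alpha_{f,B}\in\Omega_\ell\}. \]
   Context: For $\beta=(\beta_1,\dots,\beta_\ell)\in K^\ell$, $S_\beta=\{i:\beta_i\ne0\}$, and $\Omega_\ell$ is the set of $\beta\in K^\ell$ such that $\sum_{i\in C}\beta_i\ne0$ for every nonempty $C\subseteq S_\beta$ (so $0\in\Omega_\ell$). For $f\in K[z]$, $\alpha_{f,B}=(\alpha_1f(u_1),\dots,\alpha_\ell f(u_\ell))$. $N_{B,\alpha}=\{f\in K[z]: \sum_{i=1}^\ell\alpha_if(u_i)=0\}$. For a $K$-subspace $N$ of $K[z]$ and $g\in K[z]$, $(N:g)=\{h\in K[z]: hg\in N\}$. A $K$-subspace $J$ of $K[z]$ is a Mathieu subspace if whenever $a^m\in J$ for all $m\ge1$, then for every $b\in K[z]$ we have $ba^m\in J$ for all sufficiently large $m$. $\sigma(N)$ is the set of $g\in K[z]$ with $(N:g)$ an ideal, and $\tau(N)$ the set of $g$ with $(N:g)$ a Mathieu subspace of $K[z]$ (for the commutative algebra $K[z]$ all choices left/right/pre-two-sided/two-sided coincide). *)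

theory Defs
  imports Main "HOL-Library.Poly_Mapping"
begin

text \<open>Multivariate polynomials K[z_1..z_n]: variables indexed by a finite type 'n
  (so n = CARD('n) >= 1), monomials are exponent vectors 'n =>0 nat.\<close>
type_synonym ('n, 'a) mpoly = "('n \<Rightarrow>\<^sub>0 nat) \<Rightarrow>\<^sub>0 'a"

definition mp_eval :: "('n, 'a::comm_semiring_1) mpoly \<Rightarrow> ('n \<Rightarrow> 'a) \<Rightarrow> 'a" where
  "mp_eval f x = (\<Sum>m\<in>Poly_Mapping.keys f. Poly_Mapping.lookup f m * (\<Prod>i\<in>Poly_Mapping.keys (m::'n \<Rightarrow>\<^sub>0 nat). x i ^ Poly_Mapping.lookup m i))"

definition mp_smult :: "'a::comm_semiring_1 \<Rightarrow> ('n, 'a) mpoly \<Rightarrow> ('n, 'a) mpoly" where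
  "mp_smult c f = Poly_Mapping.map (\<lambda>x. c * x) f"

definition K_subspace :: "('n, 'a::comm_ring_1) mpoly set \<Rightarrow> bool" where
  "K_subspace J \<longleftrightarrow> 0 \<in> J \<and> (\<forall>a\<in>J. \<forall>b\<in>J. a + b \<in> J) \<and> (\<forall>c. \<forall>a\<in>J. mp_smult c a \<in> J)"

definition is_ideal :: "('n, 'a::comm_ring_1) mpoly set \<Rightarrow> bool" where
  "is_ideal J \<longleftrightarrow> K_subspace J \<and> (\<forall>a\<in>J. \<forall>b. b * a \<in> J)"

definition mathieu_subspace :: "('n, 'a::comm_ring_1) mpoly set \<Rightarrow> bool" where
  "mathieu_subspace J \<longleftrightarrow> K_subspace J \<and>
     (\<forall>a. (\<forall>m\<ge>1. a ^ m \<in> J) \<longrightarrow> (\<forall>b. \<exists>M. \<forall>m\<ge>M. b * a ^ m \<in> J))"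

definition colon :: "('n, 'a::comm_ring_1) mpoly set \<Rightarrow> ('n, 'a) mpoly \<Rightarrow> ('n, 'a) mpoly set" where
  "colon N g = {h. h * g \<in> N}"

definition sigma_set :: "('n, 'a::comm_ring_1) mpoly set \<Rightarrow> ('n, 'a) mpoly set" where
  "sigma_set N = {g. is_ideal (colon N g)}"

definition tau_set :: "('n, 'a::comm_ring_1) mpoly set \<Rightarrow> ('n, 'a) mpoly set" where
  "tau_set N = {g. mathieu_subspace (colon N g)}"

text \<open>Vectors in K^l are functions nat => 'a, using indices i < l.\<close>
definition supp_vec :: "nat \<Rightarrow> (nat \<Rightarrow> 'a::zero) \<Rightarrow> nat set" where
  "supp_vec l \<beta> = {i. i < l \<and> \<beta> i \<noteq> 0}"

definition Omega :: "nat \<Rightarrow> (nat \<Rightarrow> 'a::comm_ring_1) set" where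
  "Omega l = {\<beta>. \<forall>C. C \<subseteq> supp_vec l \<beta> \<and> C \<noteq> {} \<longrightarrow> sum \<beta> C \<noteq> 0}"

definition alpha_fB :: "nat \<Rightarrow> (nat \<Rightarrow> 'a::comm_ring_1) \<Rightarrow> (nat \<Rightarrow> ('n \<Rightarrow> 'a)) \<Rightarrow> ('n, 'a) mpoly \<Rightarrow> nat \<Rightarrow> 'a" where
  "alpha_fB l \<alpha> u f = (\<lambda>i. if i < l then \<alpha> i * mp_eval f (u i) else 0)"

definition N_Balpha :: "nat \<Rightarrow> (nat \<Rightarrow> 'a::comm_ring_1) \<Rightarrow> (nat \<Rightarrow> ('n \<Rightarrow> 'a)) \<Rightarrow> ('n, 'a) mpoly set" where
  "N_Balpha l \<alpha> u = {f. (\<Sum>i<l. \<alpha> i * mp_eval f (u i)) = 0}"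

end

theory Submission imports Defs begin

(*
  Evaluation at a point is a ring homomorphism K[z] -> K, so
  h g \<in> N_{B,\<alpha>} says exactly that \<Sum>_i \<beta>_i h(u_i) = 0 for \<beta> = \<alpha>_{g,B}.  Hence every
  quotient (N_{B,\<alpha>} : g) is the kernel J_\<beta> of the weighted evaluation functional
  h \<mapsto> \<Sum>_i \<beta>_i h(u_i), and the theorem reduces to two characterisations:
    J_\<beta> is an ideal        iff |S_\<beta>| \<le> 1,
    J_\<beta> is Mathieu        iff \<beta> \<in> \<Omega>_\<ell>.
  Since the u_i are distinct, every function on B is the restriction of a
  polynomial (Lagrange interpolation); this supplies the counterexamples for the
  "only if" directions.  The "if" direction for \<Omega>_\<ell> rests on a Vandermonde-type
  fact: if \<Sum>_{c\<in>V} s_c c^m = 0 for all m \<ge> 1, with V finite and 0 \<notin> V, then s = 0.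
  The file develops, in order: evaluation of polynomials, interpolation, the
  power-sum lemma and its consequence for \<Omega>_\<ell>, the kernels J_\<beta>, and the theorem.
*)

definition mon_eval :: "('n::finite \<Rightarrow>\<^sub>0 nat) \<Rightarrow> ('n \<Rightarrow> 'a::comm_semiring_1) \<Rightarrow> 'a" where
  "mon_eval m x = (\<Prod>i\<in>UNIV. x i ^ Poly_Mapping.lookup m i)"

lemma mon_eval_keys:
  "(\<Prod>i\<in>Poly_Mapping.keys m. x i ^ Poly_Mapping.lookup m i) = mon_eval m (x::'n::finite \<Rightarrow> 'a::comm_semiring_1)"
  unfolding mon_eval_def by (rule prod.mono_neutral_left) (auto simp: in_keys_iff)

lemma mon_eval_add: "mon_eval (a + b) x = mon_eval a x * mon_eval b x"
  by (simp add: mon_eval_def lookup_add power_add prod.distrib)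

lemma mp_eval_superset:
  assumes "finite A" "Poly_Mapping.keys f \<subseteq> A"
  shows "mp_eval f x = (\<Sum>m\<in>A. Poly_Mapping.lookup f m * mon_eval m x)"
  unfolding mp_eval_def mon_eval_keys
  using assms by (intro sum.mono_neutral_left) (auto simp: in_keys_iff)

lemma mp_eval_zero [simp]: "mp_eval 0 x = 0"
  by (simp add: mp_eval_def)

lemma mp_eval_add:
  "mp_eval (f + g) x = mp_eval f x + mp_eval (g::('n::finite, 'a::comm_semiring_1) mpoly) x"
proof -
  let ?A = "Poly_Mapping.keys f \<union> Poly_Mapping.keys g"
  have "mp_eval (f + g) x = (\<Sum>m\<in>?A. Poly_Mapping.lookup (f + g) m * mon_eval m x)"
    by (rule mp_eval_superset) (auto dest: subsetD[OF keys_add])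
  also have "\<dots> = (\<Sum>m\<in>?A. Poly_Mapping.lookup f m * mon_eval m x)
                 + (\<Sum>m\<in>?A. Poly_Mapping.lookup g m * mon_eval m x)"
    by (simp add: lookup_add sum.distrib distrib_right)
  also have "\<dots> = mp_eval f x + mp_eval g x"
    using mp_eval_superset[of ?A f x] mp_eval_superset[of ?A g x] by simp
  finally show ?thesis .
qed

lemma mp_eval_single: "mp_eval (Poly_Mapping.single m c) x = c * mon_eval m x"
  by (simp add: mp_eval_def mon_eval_keys)

lemma update_fresh_eq_add:
  "a \<notin> Poly_Mapping.keys f \<Longrightarrow> Poly_Mapping.update a b f = f + Poly_Mapping.single a b"
  by (rule poly_mapping_eqI) (auto simp: lookup_update lookup_add lookup_single in_keys_iff when_def)

lemma mp_eval_single_mult: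
  "mp_eval (Poly_Mapping.single a b * g) x
     = b * mon_eval a x * mp_eval (g::('n::finite, 'a::comm_semiring_1) mpoly) x"
proof (induction g rule: update_induct)
  case const
  then show ?case by simp
next
  case (update f c d)
  then show ?case
    by (simp add: update_fresh_eq_add distrib_left mult_single mp_eval_add mp_eval_single
        mon_eval_add algebra_simps)
qed

lemma mp_eval_mult:
  "mp_eval (f * g) x = mp_eval f x * mp_eval (g::('n::finite, 'a::comm_semiring_1) mpoly) x"
proof (induction f rule: update_induct)
  case const
  then show ?case by simp
next
  case (update f c d)
  then show ?case
    by (simp add: update_fresh_eq_add distrib_right mp_eval_single_mult mp_eval_add mp_eval_single)
qed

lemma mp_eval_const: "mp_eval (Poly_Mapping.single 0 c) (x::'n::finite \<Rightarrow> 'a::comm_semiring_1) = c"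
  by (simp add: mp_eval_single mon_eval_def)

lemma mp_eval_var:
  "mp_eval (Poly_Mapping.single (Poly_Mapping.single k 1) 1) (x::'n::finite \<Rightarrow> 'a::comm_semiring_1) = x k"
proof -
  have "(\<Prod>i\<in>UNIV. x i ^ Poly_Mapping.lookup (Poly_Mapping.single k (1::nat)) i) = (\<Prod>i\<in>{k}. x i)"
    by (rule prod.mono_neutral_cong_right) (auto simp: lookup_single when_def)
  then show ?thesis by (simp add: mp_eval_single mon_eval_def)
qed

lemma mp_eval_one: "mp_eval 1 (x::'n::finite \<Rightarrow> 'a::comm_semiring_1) = 1"
  using mp_eval_const[of 1 x] by (simp add: single_one)

lemma mp_eval_smult: "mp_eval (mp_smult c f) (x::'n::finite \<Rightarrow> 'a::comm_semiring_1) = c * mp_eval f x"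
proof -
  have "mp_smult c f = Poly_Mapping.single 0 c * f"
    unfolding mp_smult_def by (rule mult_map_scale_conv_mult)
  then show ?thesis by (simp add: mp_eval_mult mp_eval_const)
qed

lemma mp_eval_power: "mp_eval (f ^ m) (x::'n::finite \<Rightarrow> 'a::comm_semiring_1) = mp_eval f x ^ m"
  by (induction m) (simp_all add: mp_eval_one mp_eval_mult)

lemma mp_eval_prod:
  "mp_eval (\<Prod>i\<in>I. f i) (x::'n::finite \<Rightarrow> 'a::comm_semiring_1) = (\<Prod>i\<in>I. mp_eval (f i) x)"
  by (induction I rule: infinite_finite_induct) (simp_all add: mp_eval_one mp_eval_mult)

lemma mp_eval_sum:
  "mp_eval (\<Sum>i\<in>I. f i) (x::'n::finite \<Rightarrow> 'a::comm_semiring_1) = (\<Sum>i\<in>I. mp_eval (f i) x)"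
  by (induction I rule: infinite_finite_induct) (simp_all add: mp_eval_add)

lemma linear_separator:
  fixes a b :: "'n::finite \<Rightarrow> 'a::field"
  assumes "a \<noteq> b"
  shows "\<exists>q. mp_eval q a = 1 \<and> mp_eval q b = 0"
proof -
  obtain k where k: "a k \<noteq> b k" using assms by auto
  define q where "q = Poly_Mapping.single 0 (inverse (a k - b k)) *
      (Poly_Mapping.single (Poly_Mapping.single k (1::nat)) 1 + Poly_Mapping.single 0 (- b k))"
  have "mp_eval q y = (y k - b k) / (a k - b k)" for y
    unfolding q_def
    by (simp add: mp_eval_mult mp_eval_add mp_eval_const mp_eval_var[unfolded One_nat_def]
        divide_inverse algebra_simps)
  then show ?thesis using k by (intro exI[of _ q]) simp
qed

lemma lagrange_basis_poly:
  fixes u :: "'i \<Rightarrow> ('n::finite \<Rightarrow> 'a::field)"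
  assumes inj: "inj_on u I" and fin: "finite I" and j: "j \<in> I"
  shows "\<exists>p. \<forall>t\<in>I. mp_eval p (u t) = (if t = j then 1 else 0)"
proof -
  have "\<forall>i. \<exists>q. i \<in> I - {j} \<longrightarrow> mp_eval q (u j) = 1 \<and> mp_eval q (u i) = 0"
    using linear_separator inj j by (metis DiffE inj_on_contraD singletonI)
  then obtain q where q: "\<And>i. i \<in> I - {j} \<Longrightarrow> mp_eval (q i) (u j) = 1 \<and> mp_eval (q i) (u i) = 0"
    by metis
  have "mp_eval (\<Prod>i\<in>I - {j}. q i) (u t) = (if t = j then 1 else 0)" if t: "t \<in> I" for t
  proof (cases "t = j")
    case True
    then show ?thesis using q by (simp add: mp_eval_prod)
  next
    case False
    then have "\<exists>i\<in>I - {j}. mp_eval (q i) (u t) = 0" using q t by blast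
    then show ?thesis using False fin by (simp add: mp_eval_prod prod_zero)
  qed
  then show ?thesis by blast
qed

lemma interpolation:
  fixes u :: "'i \<Rightarrow> ('n::finite \<Rightarrow> 'a::field)"
  assumes inj: "inj_on u I" and fin: "finite I"
  shows "\<exists>p. \<forall>t\<in>I. mp_eval p (u t) = v t"
proof -
  obtain d where d: "\<And>j t. j \<in> I \<Longrightarrow> t \<in> I \<Longrightarrow> mp_eval (d j) (u t) = (if t = j then 1 else 0)"
    using lagrange_basis_poly[OF inj fin] by metis
  define p where "p = (\<Sum>j\<in>I. Poly_Mapping.single 0 (v j) * d j)"
  have "mp_eval p (u t) = v t" if t: "t \<in> I" for t
  proof -
    have "mp_eval p (u t) = (\<Sum>j\<in>I. if t = j then v j else 0)"
      unfolding p_def mp_eval_sum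
      by (rule sum.cong) (use d t in \<open>auto simp: mp_eval_mult mp_eval_const\<close>)
    also have "\<dots> = v t" using t fin by simp
    finally show ?thesis .
  qed
  then show ?thesis by blast
qed

lemma interpolation_lessThan:
  fixes u :: "nat \<Rightarrow> ('n::finite \<Rightarrow> 'a::field)"
  assumes "inj_on u {..<l}"
  obtains p where "\<And>t. t < l \<Longrightarrow> mp_eval p (u t) = v t"
  using interpolation[OF assms finite_lessThan, of v] by auto

text \<open>Power sums determine coefficients: distinct nonzero c \<in> V are linearly
  independent as the sequences (c^m)_{m \<ge> 1}.  Induction on V, multiplying by (c - x)
  to eliminate the new element x.\<close>
lemma vanishing_power_sums:
  fixes s :: "'a::field \<Rightarrow> 'a"
  assumes "finite V" "0 \<notin> V" "\<forall>m\<ge>1. (\<Sum>c\<in>V. s c * c ^ m) = 0"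
  shows "\<forall>c\<in>V. s c = 0"
  using assms
proof (induction V arbitrary: s rule: finite_induct)
  case empty
  then show ?case by simp
next
  case (insert x V)
  define s' where "s' c = s c * (c - x)" for c
  have "(\<Sum>c\<in>V. s' c * c ^ m) = 0" if m: "m \<ge> 1" for m :: nat
  proof -
    have "(\<Sum>c\<in>V. s' c * c ^ m)
            = (\<Sum>c\<in>insert x V. s c * c ^ Suc m) - x * (\<Sum>c\<in>insert x V. s c * c ^ m)"
      using insert.hyps by (simp add: s'_def sum_distrib_left sum_subtractf[symmetric] algebra_simps)
    then show ?thesis using insert.prems(2) m by (metis le_SucI diff_zero mult_zero_right)
  qed
  then have "\<forall>c\<in>V. s' c = 0" using insert by auto
  then have V0: "\<forall>c\<in>V. s c = 0" using insert.hyps by (auto simp: s'_def)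
  have "(\<Sum>c\<in>insert x V. s c * c ^ 1) = 0" using insert.prems by blast
  then have "s x * x = 0" using insert.hyps V0 by simp
  then show ?case using insert.prems V0 by simp
qed

lemma supp_vec_subset: "supp_vec l \<beta> \<subseteq> {..<l}"
  unfolding supp_vec_def by auto

lemma finite_supp_vec: "finite (supp_vec l \<beta>)"
  using finite_subset[OF supp_vec_subset] by blast

lemma sum_over_supp_vec:
  "(\<Sum>i<l. (\<beta>::nat \<Rightarrow> 'a::comm_ring_1) i * y i) = (\<Sum>i\<in>supp_vec l \<beta>. \<beta> i * y i)"
  by (rule sum.mono_neutral_right) (auto simp: supp_vec_def)

text \<open>Group the indices by the value of y; the
  grouped coefficients are subset sums of \<beta>, nonzero by the definition of \<Omega>_\<ell>.\<close>
lemma Omega_power_sums_zero: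
  fixes \<beta> :: "nat \<Rightarrow> 'a::field"
  assumes om: "\<beta> \<in> Omega l" and sums: "\<forall>m\<ge>1. (\<Sum>i<l. \<beta> i * y i ^ m) = 0"
  shows "\<forall>i\<in>supp_vec l \<beta>. y i = 0"
proof -
  let ?S = "supp_vec l \<beta>"
  define V where "V = y ` ?S - {0}"
  define s where "s c = (\<Sum>i\<in>{i\<in>?S. y i = c}. \<beta> i)" for c
  have "(\<Sum>c\<in>V. s c * c ^ m) = 0" if m: "m \<ge> 1" for m :: nat
  proof -
    have "0 = (\<Sum>i\<in>?S. \<beta> i * y i ^ m)"
      using sums m sum_over_supp_vec[where l=l and \<beta>=\<beta> and y="\<lambda>i. y i ^ m"] by simp
    also have "\<dots> = (\<Sum>c\<in>y ` ?S. \<Sum>i\<in>{i\<in>?S. y i = c}. \<beta> i * y i ^ m)"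
      using finite_supp_vec by (rule sum.image_gen)
    also have "\<dots> = (\<Sum>c\<in>y ` ?S. s c * c ^ m)"
      unfolding s_def sum_distrib_right by (rule sum.cong) auto
    also have "\<dots> = (\<Sum>c\<in>V. s c * c ^ m)"
      unfolding V_def using finite_supp_vec m by (intro sum.mono_neutral_right) auto
    finally show ?thesis by simp
  qed
  then have s0: "\<forall>c\<in>V. s c = 0"
    by (intro vanishing_power_sums) (auto simp: V_def finite_supp_vec)
  show ?thesis
  proof (rule ballI, rule ccontr)
    fix i assume i: "i \<in> ?S" and "y i \<noteq> 0"
    then have "s (y i) = 0" using s0 by (auto simp: V_def)
    moreover have "{i' \<in> ?S. y i' = y i} \<subseteq> ?S" "{i' \<in> ?S. y i' = y i} \<noteq> {}" using i by auto
    ultimately show False using om unfolding Omega_def s_def by blast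
  qed
qed

definition eval_kernel ::
  "nat \<Rightarrow> (nat \<Rightarrow> 'a::field) \<Rightarrow> (nat \<Rightarrow> ('n::finite \<Rightarrow> 'a)) \<Rightarrow> ('n, 'a) mpoly set" where
  "eval_kernel l \<beta> u = {h. (\<Sum>i<l. \<beta> i * mp_eval h (u i)) = 0}"

lemma colon_N_Balpha: "colon (N_Balpha l \<alpha> u) g = eval_kernel l (alpha_fB l \<alpha> u g) u"
  unfolding colon_def N_Balpha_def eval_kernel_def alpha_fB_def
  by (auto intro!: sum.cong simp: mp_eval_mult mult_ac)

lemma eval_kernel_subspace: "K_subspace (eval_kernel l \<beta> u)"
  unfolding K_subspace_def eval_kernel_def
  by (simp add: mp_eval_add mp_eval_smult distrib_left sum.distrib mult.left_commute
      flip: sum_distrib_left)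

lemma eval_kernel_termwise:
  "(\<And>i. i < l \<Longrightarrow> \<beta> i * mp_eval h (u i) = 0) \<Longrightarrow> h \<in> eval_kernel l \<beta> u"
  unfolding eval_kernel_def by (simp add: sum.neutral)

lemma eval_kernel_values:
  "(\<And>i. i < l \<Longrightarrow> mp_eval h (u i) = v i) \<Longrightarrow> h \<in> eval_kernel l \<beta> u \<longleftrightarrow> (\<Sum>i<l. \<beta> i * v i) = 0"
  by (simp add: eval_kernel_def)

text \<open>With at most one weight nonzero, J_\<beta> is {h. h(u_j) = 0} (or everything): an ideal.\<close>
lemma eval_kernel_ideal_if:
  assumes "card (supp_vec l \<beta>) \<le> 1"
  shows "is_ideal (eval_kernel l \<beta> u)"
  unfolding is_ideal_def
proof (intro conjI eval_kernel_subspace ballI allI)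
  fix a b assume a: "a \<in> eval_kernel l \<beta> u"
  have single: "supp_vec l \<beta> = {i}" if "i \<in> supp_vec l \<beta>" for i
    using assms that card_le_Suc0_iff_eq[OF finite_supp_vec[of l \<beta>]] by auto
  have term0: "\<beta> i * mp_eval a (u i) = 0" if "i < l" for i
  proof (cases "\<beta> i = 0")
    case False
    then have "supp_vec l \<beta> = {i}" using single that by (simp add: supp_vec_def)
    then show ?thesis using a sum_over_supp_vec[where l=l and \<beta>=\<beta> and y="\<lambda>i. mp_eval a (u i)"]
      by (simp add: eval_kernel_def)
  qed simp
  show "b * a \<in> eval_kernel l \<beta> u"
    by (rule eval_kernel_termwise) (simp add: mp_eval_mult term0 mult.left_commute[of "\<beta> _"])
qed

text \<open>With two weights \<beta>_j, \<beta>_k nonzero, the interpolant with values \<beta>_k at u_j and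
  -\<beta>_j at u_k lies in J_\<beta>, but its product with the Lagrange basis polynomial at u_j does not.\<close>
lemma eval_kernel_ideal_only_if:
  fixes u :: "nat \<Rightarrow> ('n::finite \<Rightarrow> 'a::field)"
  assumes inj: "inj_on u {..<l}" and ideal: "is_ideal (eval_kernel l \<beta> u)"
  shows "card (supp_vec l \<beta>) \<le> 1"
proof (rule ccontr)
  assume "\<not> ?thesis"
  then obtain j k where jk: "j \<in> supp_vec l \<beta>" "k \<in> supp_vec l \<beta>" "j \<noteq> k"
    using card_le_Suc0_iff_eq[OF finite_supp_vec[of l \<beta>]] by auto
  then have jkl: "j < l" "k < l" "\<beta> j \<noteq> 0" "\<beta> k \<noteq> 0" by (auto simp: supp_vec_def)
  obtain h where h:
    "\<And>t. t < l \<Longrightarrow> mp_eval h (u t) = (if t = j then \<beta> k else if t = k then - \<beta> j else 0)"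
    using interpolation_lessThan[OF inj, of "\<lambda>t. if t = j then \<beta> k else if t = k then - \<beta> j else 0"]
    by blast
  obtain b where b: "\<And>t. t < l \<Longrightarrow> mp_eval b (u t) = (if t = j then 1 else 0)"
    using interpolation_lessThan[OF inj, of "\<lambda>t. if t = j then 1 else 0"] by blast
  have "(\<Sum>i<l. \<beta> i * (if i = j then \<beta> k else if i = k then - \<beta> j else 0))
          = \<beta> j * \<beta> k + \<beta> k * - \<beta> j"
    using jkl jk(3) by (simp add: if_distrib sum.If_cases Int_absorb1 lessThan_iff flip: sum.delta')
  then have "h \<in> eval_kernel l \<beta> u"
    using h by (subst eval_kernel_values) (auto simp: algebra_simps)
  then have "b * h \<in> eval_kernel l \<beta> u" using ideal by (simp add: is_ideal_def)
  moreover have "(\<Sum>i<l. \<beta> i * (if i = j then \<beta> k else 0)) = \<beta> j * \<beta> k"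
    using jkl by (simp add: if_distrib cong: if_cong)
  ultimately show False
    using h b jkl by (subst (asm) eval_kernel_values[of _ _ _ "\<lambda>i. if i = j then \<beta> k else 0"])
      (auto simp: mp_eval_mult)
qed

text \<open>For \<beta> \<in> \<Omega>_\<ell>: if all powers of a lie in J_\<beta>, then a vanishes on the support
  of \<beta>, so every multiple b a^m lies in J_\<beta>.\<close>
lemma eval_kernel_mathieu_if:
  assumes om: "\<beta> \<in> Omega l"
  shows "mathieu_subspace (eval_kernel l \<beta> u)"
  unfolding mathieu_subspace_def
proof (intro conjI eval_kernel_subspace allI impI)
  fix a b assume "\<forall>m\<ge>1. a ^ m \<in> eval_kernel l \<beta> u"
  then have "\<forall>m\<ge>1. (\<Sum>i<l. \<beta> i * mp_eval a (u i) ^ m) = 0"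
    by (simp add: eval_kernel_def mp_eval_power)
  then have a0: "\<forall>i\<in>supp_vec l \<beta>. mp_eval a (u i) = 0"
    by (rule Omega_power_sums_zero[OF om])
  have "b * a ^ m \<in> eval_kernel l \<beta> u" if m: "m \<ge> 1" for m
    by (rule eval_kernel_termwise)
      (use a0 m in \<open>auto simp: supp_vec_def mp_eval_mult mp_eval_power\<close>)
  then show "\<exists>M. \<forall>m\<ge>M. b * a ^ m \<in> eval_kernel l \<beta> u" by blast
qed

text \<open>For \<beta> \<notin> \<Omega>_\<ell>, with C \<subseteq> S_\<beta> nonempty and \<Sum>_C \<beta> = 0: the indicator interpolant a
  of C has all powers in J_\<beta>, but b a^m \<notin> J_\<beta> for the basis polynomial b at some j \<in> C.\<close>
lemma eval_kernel_mathieu_only_if: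
  fixes u :: "nat \<Rightarrow> ('n::finite \<Rightarrow> 'a::field)"
  assumes inj: "inj_on u {..<l}" and mathieu: "mathieu_subspace (eval_kernel l \<beta> u)"
  shows "\<beta> \<in> Omega l"
proof (rule ccontr)
  assume "\<beta> \<notin> Omega l"
  then obtain C where C: "C \<subseteq> supp_vec l \<beta>" "C \<noteq> {}" "sum \<beta> C = 0"
    unfolding Omega_def by blast
  then have Cl: "C \<subseteq> {..<l}" using supp_vec_subset by blast
  obtain j where j: "j \<in> C" using C by blast
  then have jl: "j < l" "\<beta> j \<noteq> 0" using C(1) by (auto simp: supp_vec_def)
  obtain a where a: "\<And>t. t < l \<Longrightarrow> mp_eval a (u t) = (if t \<in> C then 1 else 0)"
    using interpolation_lessThan[OF inj, of "\<lambda>t. if t \<in> C then 1 else 0"] by blast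
  obtain b where b: "\<And>t. t < l \<Longrightarrow> mp_eval b (u t) = (if t = j then 1 else 0)"
    using interpolation_lessThan[OF inj, of "\<lambda>t. if t = j then 1 else 0"] by blast
  have "(\<Sum>i<l. \<beta> i * (if i \<in> C then 1 else 0)) = sum \<beta> C"
    using Cl by (simp add: if_distrib sum.inter_restrict[symmetric] Int_absorb1 cong: if_cong)
  then have "a ^ m \<in> eval_kernel l \<beta> u" if "m \<ge> 1" for m
    using a that C(3) by (subst eval_kernel_values) (auto simp: mp_eval_power)
  then obtain M where M: "\<forall>m\<ge>M. b * a ^ m \<in> eval_kernel l \<beta> u"
    using mathieu unfolding mathieu_subspace_def by blast
  have "b * a ^ Suc M \<in> eval_kernel l \<beta> u" using M le_SucI by blast
  moreover have "(\<Sum>i<l. \<beta> i * (if i = j then 1 else 0)) = \<beta> j"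
    using jl by (simp add: if_distrib cong: if_cong)
  ultimately show False
    using a b j jl by (subst (asm) eval_kernel_values[of _ _ _ "\<lambda>i. if i = j then 1 else 0"])
      (auto simp: mp_eval_mult mp_eval_power)
qed

theorem proposition6p3:
  fixes l :: nat
    and u :: "nat \<Rightarrow> ('n::finite \<Rightarrow> 'a::field)"
    and \<alpha> :: "nat \<Rightarrow> 'a"
  assumes "l \<ge> 1"
    and "inj_on u {..<l}"
  shows "sigma_set (N_Balpha l \<alpha> u) = {f. card (supp_vec l (alpha_fB l \<alpha> u f)) \<le> 1}
     \<and> tau_set (N_Balpha l \<alpha> u) = {f. alpha_fB l \<alpha> u f \<in> Omega l}"
proof -
  have ideal: "is_ideal (eval_kernel l \<beta> u) \<longleftrightarrow> card (supp_vec l \<beta>) \<le> 1" for \<beta>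
    using eval_kernel_ideal_if eval_kernel_ideal_only_if[OF assms(2)] by blast
  have mathieu: "mathieu_subspace (eval_kernel l \<beta> u) \<longleftrightarrow> \<beta> \<in> Omega l" for \<beta>
    using eval_kernel_mathieu_if eval_kernel_mathieu_only_if[OF assms(2)] by blast
  show ?thesis
    unfolding sigma_set_def tau_set_def colon_N_Balpha ideal mathieu by simp
qed

end
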